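(* Let $M$ be a 3-dimensional contact Sub-Riemannian manifold, $W$ a $C^2$ $\Delta$-minimal surface and $\hat q\in W$ a characteristic point. Choose local coordinates $(x,y,z)$ near $\hat q=0$ with $W=\{z=0\}$, $X_1(\hat q)=\partial_x$, $X_2(\hat q)=\partial_y$, and write $a_i=dz(X_i)$, $i=1,2$ (so $a_i(0)=0$). Let $$A=\begin{pmatrix}\partial_xa_1&\partial_ya_1\\ \partial_xa_2&\partial_ya_2\end{pmatrix}(0)=\begin{pmatrix}a&b\\ c&d\end{pmatrix}.$$ If $\hat q$ is an isolated characteristic point and $\det A\ne0$, then $a=d=0$, $b=-c$, and $\det A=c^2>0$; that is, $\hat q$ is a zero of index $+1$ of the map $W\ni q\mapsto(X_1F(q),X_2F(q))$, $F=z$. In particular the structure functions $c_{12}^1,c_{12}^2$ do not affect the index.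
   Context: $M$: smooth 3-manifold with a contact rank-2 distribution $\Delta$ with orthonormal frame $X_1,X_2$; canonical 1-form $\omega$ with $\omega(\Delta)=0$, $d\omega(X_1,X_2)=1$; Reeb field $X_3$ ($\omega(X_3)=1$, $d\omega(V,X_3)=0$ for $V\in\Delta$); structure functions $[X_i,X_j]=-\sum_kc_{ij}^kX_k$. For $W=\{F=0\}$ ($F\in C^2$, $dF\ne0$), a characteristic point is a point where $X_1F=X_2F=0$. $W$ is $\Delta$-minimal if at all points of $W$ with $D_1=\sqrt{(X_1F)^2+(X_2F)^2}\neq0$: $\big(X_1^2F(X_2F)^2+X_2^2F(X_1F)^2-X_1FX_2F(X_1X_2+X_2X_1)F\big)D_1^{-3}+(c_{12}^2X_1F-c_{12}^1X_2F)D_1^{-1}=0$ (a property of $W$, independent of the defining function). *)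

theory Defs
  imports "HOL-Analysis.Analysis"
begin

text \<open>Local coordinates (x,y,z) on an open set U of R^3; vector fields and 1-forms
  are maps real^3 => real^3 (a 1-form is identified with a covector via the inner product).\<close>

type_synonym vfield = "real^3 \<Rightarrow> real^3"

definition C1_on :: "(real^3) set \<Rightarrow> (real^3 \<Rightarrow> 'b::real_normed_vector) \<Rightarrow> bool" where
  "C1_on U f \<longleftrightarrow> (\<forall>p\<in>U. f differentiable (at p)) \<and>
     (\<forall>v. continuous_on U (\<lambda>p. frechet_derivative f (at p) v))"

definition vf_apply :: "vfield \<Rightarrow> (real^3 \<Rightarrow> real) \<Rightarrow> real^3 \<Rightarrow> real" where
  "vf_apply X f p = frechet_derivative f (at p) (X p)"

definition lie :: "vfield \<Rightarrow> vfield \<Rightarrow> vfield" where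
  "lie X Y p = frechet_derivative Y (at p) (X p) - frechet_derivative X (at p) (Y p)"

definition dform :: "(real^3 \<Rightarrow> real^3) \<Rightarrow> real^3 \<Rightarrow> real^3 \<Rightarrow> real^3 \<Rightarrow> real" where
  "dform w p u v = frechet_derivative w (at p) u \<bullet> v - frechet_derivative w (at p) v \<bullet> u"

definition char_pt :: "vfield \<Rightarrow> vfield \<Rightarrow> (real^3 \<Rightarrow> real) \<Rightarrow> real^3 \<Rightarrow> bool" where
  "char_pt X1 X2 F q \<longleftrightarrow> vf_apply X1 F q = 0 \<and> vf_apply X2 F q = 0"

definition Delta_minimal ::
  "vfield \<Rightarrow> vfield \<Rightarrow> (real^3 \<Rightarrow> real) \<Rightarrow> (real^3 \<Rightarrow> real) \<Rightarrow> (real^3 \<Rightarrow> real) \<Rightarrow> (real^3) set \<Rightarrow> bool" where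
  "Delta_minimal X1 X2 c1 c2 F W \<longleftrightarrow>
    (\<forall>q\<in>W. let p1 = vf_apply X1 F q; p2 = vf_apply X2 F q; D = sqrt (p1\<^sup>2 + p2\<^sup>2) in
       D \<noteq> 0 \<longrightarrow>
       (vf_apply X1 (vf_apply X1 F) q * p2\<^sup>2 + vf_apply X2 (vf_apply X2 F) q * p1\<^sup>2
          - p1 * p2 * (vf_apply X1 (vf_apply X2 F) q + vf_apply X2 (vf_apply X1 F) q)) / D ^ 3
       + (c2 q * p1 - c1 q * p2) / D = 0)"

end

theory Submission
  imports Defs
begin

text \<open>
  On \<open>W = {z = 0}\<close> the horizontal gradient of \<open>z\<close> is \<open>(a\<^sub>1, a\<^sub>2)\<close>, which vanishes at the
  characteristic point with linear part \<open>A\<close>. Clear the denominators of the minimality equation,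
  restrict it to a ray \<open>t (x, y)\<close> and divide by \<open>t\<^sup>2\<close>: the term containing the structure functions
  is \<open>O(t)\<close>, and since \<open>X\<^sub>1(0) = \<partial>\<^sub>x\<close>, \<open>X\<^sub>2(0) = \<partial>\<^sub>y\<close> the second derivatives \<open>X\<^sub>iX\<^sub>jz(0)\<close> are the
  entries of \<open>A\<close>. In the limit \<open>t \<rightarrow> 0\<close> the quadratic form \<open>Q(u, v) = d u\<^sup>2 - (b + c) u v + a v\<^sup>2\<close>
  vanishes on the image of \<open>A\<close>, which is the whole plane, so \<open>a = d = 0\<close> and \<open>b = -c\<close>.
  The structure functions are only required to be continuous at \<open>0\<close>; this follows from
  \<open>c\<^sub>1\<^sub>2\<^sup>1 = -d\<omega>([X\<^sub>1,X\<^sub>2], X\<^sub>2)\<close> and \<open>c\<^sub>1\<^sub>2\<^sup>2 = -d\<omega>(X\<^sub>1, [X\<^sub>1,X\<^sub>2])\<close>.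
\<close>

lemma has_derivative_component:
  fixes X :: "'a::real_normed_vector \<Rightarrow> 'b::real_normed_vector^'n"
  assumes "X differentiable (at q)"
  shows "((\<lambda>p. X p $ i) has_derivative (\<lambda>v. frechet_derivative X (at q) v $ i)) (at q)"
  using bounded_linear.has_derivative[OF bounded_linear_vec_nth assms[unfolded frechet_derivative_works]] .

lemma frechet_derivative_component:
  fixes X :: "'a::real_normed_vector \<Rightarrow> 'b::real_normed_vector^'n"
  assumes "X differentiable (at q)"
  shows "frechet_derivative (\<lambda>p. X p $ i) (at q) = (\<lambda>v. frechet_derivative X (at q) v $ i)"
  using frechet_derivative_at[OF has_derivative_component[OF assms]] by simp

lemma vf_apply_coordinate: "vf_apply X (\<lambda>p. p $ i) = (\<lambda>q. X q $ i)"
proof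
  fix q :: "real^3"
  have "frechet_derivative (\<lambda>p. p $ i) (at q) = (\<lambda>v. v $ i)"
    using frechet_derivative_component[of "\<lambda>p. p" q i] by simp
  then show "vf_apply X (\<lambda>p. p $ i) q = X q $ i"
    by (simp add: vf_apply_def)
qed

lemma vf_apply_vf_apply_coordinate:
  assumes "Y differentiable (at q)"
  shows "vf_apply X (vf_apply Y (\<lambda>p. p $ i)) q = frechet_derivative Y (at q) (X q) $ i"
  using frechet_derivative_component[OF assms]
  by (simp add: vf_apply_def vf_apply_coordinate)

lemma C1_on_continuous_at_derivative_apply:
  fixes f :: "real^3 \<Rightarrow> 'b::real_normed_vector"
  assumes f: "C1_on U f" and U: "open U" "p \<in> U" and v: "continuous (at p) v"
  shows "continuous (at p) (\<lambda>q. frechet_derivative f (at q) (v q))"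
proof -
  have "\<forall>\<^sub>F q in nhds p. frechet_derivative f (at q) (v q)
          = (\<Sum>i\<in>Basis. (v q \<bullet> i) *\<^sub>R frechet_derivative f (at q) i)"
    using eventually_nhds_in_open[OF U]
  proof eventually_elim
    case (elim q)
    then have lin: "linear (frechet_derivative f (at q))"
      using f frechet_derivative_works has_derivative_linear unfolding C1_on_def by blast
    have "frechet_derivative f (at q) (v q) = frechet_derivative f (at q) (\<Sum>i\<in>Basis. (v q \<bullet> i) *\<^sub>R i)"
      by (simp only: euclidean_representation)
    also have "\<dots> = (\<Sum>i\<in>Basis. (v q \<bullet> i) *\<^sub>R frechet_derivative f (at q) i)"
      using lin by (simp add: linear_sum linear_scale)
    finally show ?case .
  qed
  moreover have "continuous (at p) (\<lambda>q. frechet_derivative f (at q) i)" for i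
    using f U continuous_on_eq_continuous_at unfolding C1_on_def by blast
  then have "continuous (at p) (\<lambda>q. \<Sum>i\<in>Basis. (v q \<bullet> i) *\<^sub>R frechet_derivative f (at q) i)"
    using v by (intro continuous_sum continuous_scaleR continuous_inner continuous_const)
  ultimately show ?thesis
    by (simp only: isCont_cong)
qed

lemma continuous_at_vf_apply_vf_apply_coordinate:
  assumes Y: "C1_on U Y" and U: "open U" "p \<in> U" and X: "continuous (at p) X"
  shows "continuous (at p) (vf_apply X (vf_apply Y (\<lambda>q. q $ i)))"
proof -
  have eq: "\<forall>\<^sub>F q in nhds p. frechet_derivative Y (at q) (X q) $ i = vf_apply X (vf_apply Y (\<lambda>q. q $ i)) q"
    using eventually_nhds_in_open[OF U]
    by eventually_elim (use Y vf_apply_vf_apply_coordinate in \<open>auto simp: C1_on_def\<close>)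
  have "continuous (at p) (\<lambda>q. frechet_derivative Y (at q) (X q) $ i)"
    using C1_on_continuous_at_derivative_apply[OF Y U X] unfolding continuous_at
    by (rule tendsto_vec_nth)
  then show ?thesis
    using isCont_cong[OF eq] by simp
qed

lemma dform_skew: "dform \<omega> p v u = - dform \<omega> p u v"
  by (simp add: dform_def)

lemma linear_dform_left:
  assumes "\<omega> differentiable (at p)"
  shows "linear (\<lambda>u. dform \<omega> p u v)"
proof -
  have "linear (frechet_derivative \<omega> (at p))"
    using assms frechet_derivative_works has_derivative_linear by blast
  then show ?thesis
    unfolding dform_def linear_iff
    by (simp add: linear_add linear_scale inner_add_left inner_add_right algebra_simps)
qed

lemma structure_functions_eq_dform:
  assumes "\<omega> differentiable (at p)"
    and L: "L = - (k1 *\<^sub>R e1 + k2 *\<^sub>R e2 + k3 *\<^sub>R e3)"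
    and "dform \<omega> p e1 e2 = 1" "dform \<omega> p e1 e3 = 0" "dform \<omega> p e2 e3 = 0"
  shows "k1 = - dform \<omega> p L e2" "k2 = - dform \<omega> p e1 L"
proof -
  note lin = linear_dform_left[OF assms(1)]
  have L_expand: "dform \<omega> p L v = - (k1 * dform \<omega> p e1 v + k2 * dform \<omega> p e2 v + k3 * dform \<omega> p e3 v)" for v
    unfolding L linear_neg[OF lin] linear_add[OF lin] linear_scale[OF lin] by simp
  have self: "dform \<omega> p u u = 0" for u
    by (simp add: dform_def)
  have "dform \<omega> p e2 e1 = -1" "dform \<omega> p e3 e1 = 0" "dform \<omega> p e3 e2 = 0"
    using assms(3-5) dform_skew[of \<omega> p e1 e2] dform_skew[of \<omega> p e1 e3] dform_skew[of \<omega> p e2 e3]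
    by simp_all
  then show "k1 = - dform \<omega> p L e2" "k2 = - dform \<omega> p e1 L"
    using L_expand[of e1] L_expand[of e2] assms(3) self[of e1] self[of e2] dform_skew[of \<omega> p L e1]
    by simp_all
qed

lemma continuous_at_structure_functions:
  fixes X1 X2 X3 \<omega> :: vfield
  assumes U: "open U" "p \<in> U"
    and reg: "C1_on U X1" "C1_on U X2" "C1_on U \<omega>"
    and dform12: "\<And>q. q \<in> U \<Longrightarrow> dform \<omega> q (X1 q) (X2 q) = 1"
    and dform13: "\<And>q. q \<in> U \<Longrightarrow> dform \<omega> q (X1 q) (X3 q) = 0"
    and dform23: "\<And>q. q \<in> U \<Longrightarrow> dform \<omega> q (X2 q) (X3 q) = 0"
    and struct: "\<And>q. q \<in> U \<Longrightarrow> lie X1 X2 q = - (c1 q *\<^sub>R X1 q + c2 q *\<^sub>R X2 q + c3 q *\<^sub>R X3 q)"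
  shows "continuous (at p) c1" "continuous (at p) c2"
proof -
  have eq: "\<forall>\<^sub>F q in nhds p. - dform \<omega> q (lie X1 X2 q) (X2 q) = c1 q \<and> - dform \<omega> q (X1 q) (lie X1 X2 q) = c2 q"
    using eventually_nhds_in_open[OF U]
  proof eventually_elim
    case (elim q)
    then have "\<omega> differentiable (at q)"
      using reg(3) by (simp add: C1_on_def)
    from structure_functions_eq_dform[OF this struct dform12 dform13 dform23] elim
    show ?case by simp
  qed
  have X: "continuous (at p) X1" "continuous (at p) X2"
    using reg(1,2) U(2) differentiable_imp_continuous_within unfolding C1_on_def by blast+
  have "continuous (at p) (lie X1 X2)"
    unfolding lie_def[abs_def]
    by (intro continuous_diff C1_on_continuous_at_derivative_apply[OF reg(1) U]
        C1_on_continuous_at_derivative_apply[OF reg(2) U] X)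
  moreover have "continuous (at p) (\<lambda>q. dform \<omega> q (u q) (v q))"
    if "continuous (at p) u" "continuous (at p) v" for u v
    unfolding dform_def
    by (intro continuous_diff continuous_inner C1_on_continuous_at_derivative_apply[OF reg(3) U] that)
  ultimately have "continuous (at p) (\<lambda>q. - dform \<omega> q (lie X1 X2 q) (X2 q))"
    "continuous (at p) (\<lambda>q. - dform \<omega> q (X1 q) (lie X1 X2 q))"
    using X by (auto intro: continuous_minus)
  moreover have "\<forall>\<^sub>F q in nhds p. - dform \<omega> q (lie X1 X2 q) (X2 q) = c1 q"
    "\<forall>\<^sub>F q in nhds p. - dform \<omega> q (X1 q) (lie X1 X2 q) = c2 q"
    using eventually_mono[OF eq] by auto
  ultimately show "continuous (at p) c1" "continuous (at p) c2"
    by (simp_all add: isCont_cong)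
qed

lemma tendsto_difference_quotient_along_ray:
  fixes g :: "'a::real_normed_vector \<Rightarrow> real"
  assumes g: "(g has_derivative G) (at 0)" and g0: "g 0 = 0"
  shows "((\<lambda>t. g (t *\<^sub>R w) / t) \<longlongrightarrow> G w) (at 0)"
proof -
  have "((\<lambda>t. t *\<^sub>R w) has_derivative (\<lambda>t. t *\<^sub>R w)) (at 0)"
    by (rule bounded_linear_imp_has_derivative[OF bounded_linear_scaleR_left])
  moreover have "(g has_derivative G) (at ((0::real) *\<^sub>R w))"
    using g by simp
  ultimately have "((\<lambda>t. g (t *\<^sub>R w)) has_derivative (\<lambda>t. G (t *\<^sub>R w))) (at 0)"
    by (rule has_derivative_compose[unfolded o_def])
  moreover have "(\<lambda>t. G (t *\<^sub>R w)) = (*) (G w)"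
    using has_derivative_linear[OF g] by (auto simp: linear_scale)
  ultimately have "((\<lambda>t. g (t *\<^sub>R w)) has_field_derivative G w) (at 0)"
    by (simp add: has_field_derivative_def)
  then show ?thesis
    using g0 by (simp add: has_field_derivative_iff)
qed

lemma Delta_minimalD:
  assumes "Delta_minimal X1 X2 c1 c2 F W" "q \<in> W"
    and nz: "(vf_apply X1 F q)\<^sup>2 + (vf_apply X2 F q)\<^sup>2 \<noteq> 0"
  shows "vf_apply X1 (vf_apply X1 F) q * (vf_apply X2 F q)\<^sup>2 + vf_apply X2 (vf_apply X2 F) q * (vf_apply X1 F q)\<^sup>2
      - vf_apply X1 F q * vf_apply X2 F q * (vf_apply X1 (vf_apply X2 F) q + vf_apply X2 (vf_apply X1 F) q)
      + (c2 q * vf_apply X1 F q - c1 q * vf_apply X2 F q) * ((vf_apply X1 F q)\<^sup>2 + (vf_apply X2 F q)\<^sup>2) = 0"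
    (is "?M + ?K * ?D2 = 0")
proof -
  define D where "D = sqrt ?D2"
  have "D > 0"
    using nz unfolding D_def by (simp add: sum_power2_gt_zero_iff)
  have clear: "M + K * D\<^sup>2 = 0" if "M / D ^ 3 + K / D = 0" for M K
  proof -
    have "M + K * D\<^sup>2 = D ^ 3 * (M / D ^ 3 + K / D)"
      using \<open>D > 0\<close> by (simp add: field_simps power2_eq_square power3_eq_cube)
    then show ?thesis
      using that by simp
  qed
  have "?M / D ^ 3 + ?K / D = 0"
    using assms(1,2) \<open>D > 0\<close> unfolding Delta_minimal_def Let_def D_def by auto
  from clear[OF this] show ?thesis
    unfolding D_def by simp
qed

lemma quadratic_part_vanishes_along_ray:
  fixes g1 g2 m11 m22 m12 k1 k2 :: "'a::real_normed_vector \<Rightarrow> real"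
  assumes g1: "(g1 has_derivative G1) (at 0)" "g1 0 = 0"
    and g2: "(g2 has_derivative G2) (at 0)" "g2 0 = 0"
    and cont: "continuous (at 0) m11" "continuous (at 0) m22" "continuous (at 0) m12"
      "continuous (at 0) k1" "continuous (at 0) k2"
    and ray: "\<forall>\<^sub>F t in at_right 0. t *\<^sub>R w \<in> S"
    and eq: "\<And>q. q \<in> S \<Longrightarrow> (g1 q)\<^sup>2 + (g2 q)\<^sup>2 \<noteq> 0 \<Longrightarrow>
       m11 q * (g2 q)\<^sup>2 + m22 q * (g1 q)\<^sup>2 - g1 q * g2 q * m12 q
       + (k2 q * g1 q - k1 q * g2 q) * ((g1 q)\<^sup>2 + (g2 q)\<^sup>2) = 0"
  shows "m11 0 * (G2 w)\<^sup>2 + m22 0 * (G1 w)\<^sup>2 - G1 w * G2 w * m12 0 = 0"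
proof (cases "(G1 w)\<^sup>2 + (G2 w)\<^sup>2 = 0")
  case True
  then show ?thesis
    by simp
next
  case False
  define r1 where "r1 t = g1 (t *\<^sub>R w) / t" for t
  define r2 where "r2 t = g2 (t *\<^sub>R w) / t" for t
  \<comment> \<open>the equation at \<open>t *\<^sub>R w\<close>, divided by \<open>t\<^sup>2\<close>\<close>
  define E where "E t = m11 (t *\<^sub>R w) * (r2 t)\<^sup>2 + m22 (t *\<^sub>R w) * (r1 t)\<^sup>2 - r1 t * r2 t * m12 (t *\<^sub>R w)
    + t * (k2 (t *\<^sub>R w) * r1 t - k1 (t *\<^sub>R w) * r2 t) * ((r1 t)\<^sup>2 + (r2 t)\<^sup>2)" for t
  have r: "(r1 \<longlongrightarrow> G1 w) (at_right 0)" "(r2 \<longlongrightarrow> G2 w) (at_right 0)"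
    unfolding r1_def r2_def
    using tendsto_difference_quotient_along_ray[OF g1] tendsto_difference_quotient_along_ray[OF g2]
    by (auto intro: tendsto_within_subset)
  have "((\<lambda>t. t *\<^sub>R w) \<longlongrightarrow> 0) (at_right 0)"
    by (auto intro!: tendsto_eq_intros)
  then have "((\<lambda>t. m (t *\<^sub>R w)) \<longlongrightarrow> m 0) (at_right 0)" if "continuous (at 0) m" for m :: "'a \<Rightarrow> real"
    using isCont_tendsto_compose that by blast
  then have "(E \<longlongrightarrow> m11 0 * (G2 w)\<^sup>2 + m22 0 * (G1 w)\<^sup>2 - G1 w * G2 w * m12 0
      + 0 * (k2 0 * G1 w - k1 0 * G2 w) * ((G1 w)\<^sup>2 + (G2 w)\<^sup>2)) (at_right 0)"
    unfolding E_def[abs_def] using cont r by (intro tendsto_intros) auto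
  moreover have "\<forall>\<^sub>F t in at_right 0. E t = 0"
  proof -
    have "((\<lambda>t. (r1 t)\<^sup>2 + (r2 t)\<^sup>2) \<longlongrightarrow> (G1 w)\<^sup>2 + (G2 w)\<^sup>2) (at_right 0)"
      using r by (intro tendsto_intros)
    then have "\<forall>\<^sub>F t in at_right 0. (r1 t)\<^sup>2 + (r2 t)\<^sup>2 \<noteq> 0"
      using False tendsto_imp_eventually_ne by blast
    then show ?thesis
      using ray eventually_at_right_less[of "0::real"]
    proof eventually_elim
      case (elim t)
      then have g: "g1 (t *\<^sub>R w) = t * r1 t" "g2 (t *\<^sub>R w) = t * r2 t"
        by (simp_all add: r1_def r2_def)
      have "(g1 (t *\<^sub>R w))\<^sup>2 + (g2 (t *\<^sub>R w))\<^sup>2 = t\<^sup>2 * ((r1 t)\<^sup>2 + (r2 t)\<^sup>2)"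
        unfolding g by (simp add: algebra_simps)
      then have "(g1 (t *\<^sub>R w))\<^sup>2 + (g2 (t *\<^sub>R w))\<^sup>2 \<noteq> 0"
        using elim by simp
      from eq[OF \<open>t *\<^sub>R w \<in> S\<close> this] have "t\<^sup>2 * E t = 0"
        unfolding g E_def by (simp add: algebra_simps power2_eq_square)
      then show ?case
        using elim by simp
    qed
  qed
  ultimately show ?thesis
    using tendsto_unique[OF trivial_limit_at_right_real] tendsto_eventually by fastforce
qed

lemma skew_if_quadratic_form_vanishes:
  fixes a b c d :: real
  assumes Q: "\<And>x y. a * (c*x + d*y)\<^sup>2 + d * (a*x + b*y)\<^sup>2 - (a*x + b*y) * (c*x + d*y) * (b + c) = 0"
    and det: "a * d - b * c \<noteq> 0"
  shows "a = 0 \<and> d = 0 \<and> b = - c"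
proof -
  have "d * (a * d - b * c)\<^sup>2 = 0"
    using Q[of d "- c"] by (simp add: algebra_simps power2_eq_square)
  then have d: "d = 0"
    using det by simp
  have "a * (a * d - b * c)\<^sup>2 = 0"
    using Q[of "- b" a] by (simp add: algebra_simps power2_eq_square)
  then have a: "a = 0"
    using det by simp
  have "b * c * (b + c) = 0"
    using Q[of 1 1] a d by (simp add: algebra_simps power2_eq_square)
  then show ?thesis
    using a d det by simp
qed

lemma quadratic_form_vanishes_at_characteristic_point:
  fixes X1 X2 :: vfield and c1 c2 :: "real^3 \<Rightarrow> real" and a b c d x y :: real
  assumes U: "open U" "0 \<in> U"
    and reg: "C1_on U X1" "C1_on U X2"
    and cont: "continuous (at 0) c1" "continuous (at 0) c2"
    and frame0: "X1 0 = axis 1 1" "X2 0 = axis 2 1"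
    and minimal: "Delta_minimal X1 X2 c1 c2 (\<lambda>p. p $ 3) {p\<in>U. p $ 3 = 0}"
    and a_def: "a = frechet_derivative (\<lambda>p. X1 p $ 3) (at 0) (axis 1 1)"
    and b_def: "b = frechet_derivative (\<lambda>p. X1 p $ 3) (at 0) (axis 2 1)"
    and c_def: "c = frechet_derivative (\<lambda>p. X2 p $ 3) (at 0) (axis 1 1)"
    and d_def: "d = frechet_derivative (\<lambda>p. X2 p $ 3) (at 0) (axis 2 1)"
  shows "a * (c*x + d*y)\<^sup>2 + d * (a*x + b*y)\<^sup>2 - (a*x + b*y) * (c*x + d*y) * (b + c) = 0"
proof -
  let ?F = "\<lambda>p::real^3. p $ 3"
  define w :: "real^3" where "w = x *\<^sub>R axis 1 1 + y *\<^sub>R axis 2 1"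
  have diff: "X1 differentiable (at 0)" "X2 differentiable (at 0)"
    using reg U(2) unfolding C1_on_def by blast+
  have G: "((\<lambda>p. X1 p $ 3) has_derivative frechet_derivative (\<lambda>p. X1 p $ 3) (at 0)) (at 0)"
    "((\<lambda>p. X2 p $ 3) has_derivative frechet_derivative (\<lambda>p. X2 p $ 3) (at 0)) (at 0)"
    using has_derivative_component[OF diff(1)] has_derivative_component[OF diff(2)]
      frechet_derivative_component[OF diff(1)] frechet_derivative_component[OF diff(2)] by simp_all
  have Gw: "frechet_derivative (\<lambda>p. X1 p $ 3) (at 0) w = a * x + b * y"
    "frechet_derivative (\<lambda>p. X2 p $ 3) (at 0) w = c * x + d * y"
    unfolding w_def a_def b_def c_def d_def
    using has_derivative_linear[OF G(1)] has_derivative_linear[OF G(2)]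
    by (simp_all add: linear_add linear_scale mult.commute)
  have m0: "vf_apply X1 (vf_apply X1 ?F) 0 = a" "vf_apply X2 (vf_apply X2 ?F) 0 = d"
    "vf_apply X1 (vf_apply X2 ?F) 0 + vf_apply X2 (vf_apply X1 ?F) 0 = b + c"
    unfolding a_def b_def c_def d_def vf_apply_vf_apply_coordinate[OF diff(1)]
      vf_apply_vf_apply_coordinate[OF diff(2)] frechet_derivative_component[OF diff(1)]
      frechet_derivative_component[OF diff(2)] frame0
    by simp_all
  have X: "continuous (at 0) X1" "continuous (at 0) X2"
    using diff differentiable_imp_continuous_within by blast+
  have "((\<lambda>t. t *\<^sub>R w) \<longlongrightarrow> 0) (at_right 0)"
    by (auto intro!: tendsto_eq_intros)
  then have "\<forall>\<^sub>F t in at_right 0. t *\<^sub>R w \<in> U"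
    using U topological_tendstoD by blast
  then have ray: "\<forall>\<^sub>F t in at_right 0. t *\<^sub>R w \<in> {p\<in>U. p $ 3 = 0}"
    by eventually_elim (simp add: w_def axis_def)
  have "vf_apply X1 (vf_apply X1 ?F) 0 * (frechet_derivative (\<lambda>p. X2 p $ 3) (at 0) w)\<^sup>2
      + vf_apply X2 (vf_apply X2 ?F) 0 * (frechet_derivative (\<lambda>p. X1 p $ 3) (at 0) w)\<^sup>2
      - frechet_derivative (\<lambda>p. X1 p $ 3) (at 0) w * frechet_derivative (\<lambda>p. X2 p $ 3) (at 0) w
        * (vf_apply X1 (vf_apply X2 ?F) 0 + vf_apply X2 (vf_apply X1 ?F) 0) = 0"
  proof (rule quadratic_part_vanishes_along_ray[OF G(1) _ G(2) _ _ _ _ cont ray])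
    show "X1 0 $ 3 = 0" "X2 0 $ 3 = 0"
      by (simp_all add: frame0 axis_def)
    show "continuous (at 0) (vf_apply X1 (vf_apply X1 ?F))"
      "continuous (at 0) (vf_apply X2 (vf_apply X2 ?F))"
      "continuous (at 0) (\<lambda>q. vf_apply X1 (vf_apply X2 ?F) q + vf_apply X2 (vf_apply X1 ?F) q)"
      using continuous_at_vf_apply_vf_apply_coordinate[OF reg(1) U]
        continuous_at_vf_apply_vf_apply_coordinate[OF reg(2) U] X
      by (auto intro: continuous_add)
    show "vf_apply X1 (vf_apply X1 ?F) q * (X2 q $ 3)\<^sup>2 + vf_apply X2 (vf_apply X2 ?F) q * (X1 q $ 3)\<^sup>2
        - X1 q $ 3 * X2 q $ 3 * (vf_apply X1 (vf_apply X2 ?F) q + vf_apply X2 (vf_apply X1 ?F) q)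
        + (c2 q * X1 q $ 3 - c1 q * X2 q $ 3) * ((X1 q $ 3)\<^sup>2 + (X2 q $ 3)\<^sup>2) = 0"
      if "q \<in> {p\<in>U. p $ 3 = 0}" "(X1 q $ 3)\<^sup>2 + (X2 q $ 3)\<^sup>2 \<noteq> 0" for q
      using Delta_minimalD[OF minimal that(1)] that(2) by (simp add: vf_apply_coordinate)
  qed
  then show ?thesis
    unfolding m0 Gw by simp
qed

theorem mainTheorem9:
  fixes U :: "(real^3) set"
    and X1 X2 X3 \<omega> :: vfield
    and c1 c2 c3 :: "real^3 \<Rightarrow> real"
    and a b c d :: real
  assumes U: "open U" "0 \<in> U"
    and reg: "C1_on U X1" "C1_on U X2" "C1_on U \<omega>"
    and contact: "\<forall>p\<in>U. \<forall>\<alpha> \<beta> \<gamma>::real.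
         \<alpha> *\<^sub>R X1 p + \<beta> *\<^sub>R X2 p + \<gamma> *\<^sub>R lie X1 X2 p = 0 \<longrightarrow> \<alpha> = 0 \<and> \<beta> = 0 \<and> \<gamma> = 0"
    and omega: "\<forall>p\<in>U. \<omega> p \<bullet> X1 p = 0 \<and> \<omega> p \<bullet> X2 p = 0 \<and> dform \<omega> p (X1 p) (X2 p) = 1"
    and reeb: "\<forall>p\<in>U. \<omega> p \<bullet> X3 p = 1 \<and> (\<forall>V\<in>span {X1 p, X2 p}. dform \<omega> p V (X3 p) = 0)"
    and struct: "\<forall>p\<in>U. lie X1 X2 p = - (c1 p *\<^sub>R X1 p + c2 p *\<^sub>R X2 p + c3 p *\<^sub>R X3 p)"
    and frame0: "X1 0 = axis 1 1" "X2 0 = axis 2 1"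
    and minimal: "Delta_minimal X1 X2 c1 c2 (\<lambda>p. p $ 3) {p\<in>U. p $ 3 = 0}"
    and charpt: "char_pt X1 X2 (\<lambda>p. p $ 3) 0"
    and isolated: "\<exists>\<epsilon>>0. \<forall>q\<in>{p\<in>U. p $ 3 = 0}. 0 < norm q \<and> norm q < \<epsilon> \<longrightarrow>
                      \<not> char_pt X1 X2 (\<lambda>p. p $ 3) q"
    and a_def: "a = frechet_derivative (\<lambda>p. X1 p $ 3) (at 0) (axis 1 1)"
    and b_def: "b = frechet_derivative (\<lambda>p. X1 p $ 3) (at 0) (axis 2 1)"
    and c_def: "c = frechet_derivative (\<lambda>p. X2 p $ 3) (at 0) (axis 1 1)"
    and d_def: "d = frechet_derivative (\<lambda>p. X2 p $ 3) (at 0) (axis 2 1)"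
    and detA: "det (vector [vector [a, b], vector [c, d]] :: real^2^2) \<noteq> 0"
  shows "a = 0 \<and> d = 0 \<and> b = - c \<and>
         det (vector [vector [a, b], vector [c, d]] :: real^2^2) = c\<^sup>2 \<and> c\<^sup>2 > 0"
proof -
  have dform: "dform \<omega> q (X1 q) (X2 q) = 1" "dform \<omega> q (X1 q) (X3 q) = 0" "dform \<omega> q (X2 q) (X3 q) = 0"
    if "q \<in> U" for q
    using omega reeb that by (auto intro: span_base)
  have "continuous (at 0) c1" "continuous (at 0) c2"
    using continuous_at_structure_functions[OF U reg dform] struct by auto
  then have Q: "a * (c*x + d*y)\<^sup>2 + d * (a*x + b*y)\<^sup>2 - (a*x + b*y) * (c*x + d*y) * (b + c) = 0" for x y
    by (rule quadratic_form_vanishes_at_characteristic_point[OF U reg(1,2) _ _ frame0 minimal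
          a_def b_def c_def d_def])
  have det: "det (vector [vector [a, b], vector [c, d]] :: real^2^2) = a * d - b * c"
    by (simp add: det_2)
  then have "a = 0 \<and> d = 0 \<and> b = - c"
    using skew_if_quadratic_form_vanishes[OF Q] detA by simp
  then show ?thesis
    using detA det by (simp add: power2_eq_square zero_less_mult_iff linorder_neq_iff)
qed

end
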